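(* The family $\mathcal{P}_{gd}$ of good isomorphisms is cofinal in $\mathcal{P}$ (every $p\in\mathcal{P}$ is extended by some element of $\mathcal{P}_{gd}$). Furthermore, for every $\gamma\in\mathrm{Aut}(\mathbb{Q},<)$ the family $\mathcal{P}_{gd}\cap\mathcal{P}_\gamma$ is cofinal in $\mathcal{P}_\gamma$.
   Context: $\mathcal{P}$ is the set of finite partial isomorphisms of $(\mathbb{Q},<)$, ordered by extension. $\mathrm{Aut}(\mathbb{Q},<)$ carries the topology of pointwise convergence; $\mathcal{C}_\gamma$ is the closure of $\{\sigma\gamma\sigma^{-1}:\sigma\in\mathrm{Aut}(\mathbb{Q},<)\}$ and $\mathcal{P}_\gamma=\{p\in\mathcal{P}: p$ extends to an element of $\mathcal{C}_\gamma\}$. For $a\in\mathrm{Dom}(p)\cup\mathrm{Rng}(p)$, $\wp_p(a)$ is the sign ($+,0,-$) of $p(a)-a$ if $a\in\mathrm{Dom}(p)$, or of $a-p^{-1}(a)$ if $a\in\mathrm{Rng}(p)$. Elements $a,b$ are $p$-related if $a=b$, or if $\wp_p(a)=+$ or $\wp_p(b)=+$ and one of $a\le b\le p(a)$, $b\le a\le p(b)$, $p^{-1}(a)\le b\le a$, $p^{-1}(b)\le a\le b$ holds, or if $\wp_p(a)=-$ or $\wp_p(b)=-$ and one of $a\le b\le p^{-1}(a)$, $b\le a\le p^{-1}(b)$, $p(a)\le b\le a$, $p(b)\le a\le b$ holds (when defined). $\sim_p$ is the generated equivalence; classes meeting $\mathrm{Dom}(p)\cup\mathrm{Rng}(p)$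 are colored $p$-orbitals, with parity $\wp_p$, linearly ordered by $I\prec J$ iff every element of $I$ is below every element of $J$. A bad pair of $p$ is $a<a'$ in $\mathrm{Dom}(p)\cup\mathrm{Rng}(p)$ such that either the colored $p$-orbitals of $a,a'$ and all colored $p$-orbitals between them have parity $+$ and $p(a)$, $p^{-1}(a')$ are undefined, or they all have parity $-$ and $p(a')$, $p^{-1}(a)$ are undefined. $p$ is a good isomorphism ($p\in\mathcal{P}_{gd}$) if no colored $p$-orbital of parity $+$ or $-$ contains a bad pair, and any two colored $p$-orbitals of parities in $\{+,-\}$ which are neighbours in the ordering of colored $p$-orbitals have different parities. *)

theory Defs
  imports Main "HOL.Rat"
begin

definition D :: "(rat \<rightharpoonup> rat) \<Rightarrow> rat set" where
  "D p = dom p \<union> ran p"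

definition PI :: "(rat \<rightharpoonup> rat) set" where
  "PI = {p. finite (dom p) \<and>
            (\<forall>a\<in>dom p. \<forall>b\<in>dom p. a < b \<longrightarrow> the (p a) < the (p b))}"

definition AutQ :: "(rat \<Rightarrow> rat) set" where
  "AutQ = {f. bij f \<and> (\<forall>x y. x < y \<longleftrightarrow> f x < f y)}"

(* closure of the conjugacy class of gamma in Aut(Q,<), topology of pointwise convergence
   (Q discrete): g is in the closure iff every finite restriction of g is matched by a conjugate *)
definition Cl :: "(rat \<Rightarrow> rat) \<Rightarrow> (rat \<Rightarrow> rat) set" where
  "Cl \<gamma> = {g \<in> AutQ. \<forall>A. finite A \<longrightarrow>
              (\<exists>\<sigma>\<in>AutQ. \<forall>x\<in>A. g x = (\<sigma> \<circ> \<gamma> \<circ> inv \<sigma>) x)}"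

definition P_gamma :: "(rat \<Rightarrow> rat) \<Rightarrow> (rat \<rightharpoonup> rat) set" where
  "P_gamma \<gamma> = {p \<in> PI. \<exists>g\<in>Cl \<gamma>. p \<subseteq>\<^sub>m (Some \<circ> g)}"

(* parity: 1 for +, 0 for 0, -1 for -; set to 0 outside Dom(p) \<union> Rng(p) (never used there) *)
definition par :: "(rat \<rightharpoonup> rat) \<Rightarrow> rat \<Rightarrow> rat" where
  "par p a = (if a \<in> dom p then sgn (the (p a) - a)
              else if a \<in> ran p then sgn (a - (THE c. p c = Some a))
              else 0)"

definition prel :: "(rat \<rightharpoonup> rat) \<Rightarrow> rat \<Rightarrow> rat \<Rightarrow> bool" where
  "prel p a b \<longleftrightarrow> a = b \<or>
     ((par p a = 1 \<or> par p b = 1) \<and>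
       ((\<exists>c. p a = Some c \<and> a \<le> b \<and> b \<le> c) \<or>
        (\<exists>c. p b = Some c \<and> b \<le> a \<and> a \<le> c) \<or>
        (\<exists>c. p c = Some a \<and> c \<le> b \<and> b \<le> a) \<or>
        (\<exists>c. p c = Some b \<and> c \<le> a \<and> a \<le> b))) \<or>
     ((par p a = -1 \<or> par p b = -1) \<and>
       ((\<exists>c. p c = Some a \<and> a \<le> b \<and> b \<le> c) \<or>
        (\<exists>c. p c = Some b \<and> b \<le> a \<and> a \<le> c) \<or>
        (\<exists>c. p a = Some c \<and> c \<le> b \<and> b \<le> a) \<or>
        (\<exists>c. p b = Some c \<and> c \<le> a \<and> a \<le> b)))"

definition psim :: "(rat \<rightharpoonup> rat) \<Rightarrow> rat \<Rightarrow> rat \<Rightarrow> bool" where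
  "psim p = equivclp (prel p)"

definition orbital :: "(rat \<rightharpoonup> rat) \<Rightarrow> rat \<Rightarrow> rat set" where
  "orbital p a = {b. psim p a b}"

definition colored :: "(rat \<rightharpoonup> rat) \<Rightarrow> rat set set" where
  "colored p = {orbital p a | a. a \<in> D p}"

definition orb_par :: "(rat \<rightharpoonup> rat) \<Rightarrow> rat set \<Rightarrow> rat \<Rightarrow> bool" where
  "orb_par p I s \<longleftrightarrow> I \<in> colored p \<and> (\<forall>x\<in>I \<inter> D p. par p x = s)"

definition oprec :: "rat set \<Rightarrow> rat set \<Rightarrow> bool" where
  "oprec I J \<longleftrightarrow> (\<forall>x\<in>I. \<forall>y\<in>J. x < y)"

definition between :: "(rat \<rightharpoonup> rat) \<Rightarrow> rat \<Rightarrow> rat \<Rightarrow> rat set \<Rightarrow> bool" where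
  "between p a a' K \<longleftrightarrow> K \<in> colored p \<and>
     (K = orbital p a \<or> K = orbital p a' \<or>
      (oprec (orbital p a) K \<and> oprec K (orbital p a')))"

definition bad_pair :: "(rat \<rightharpoonup> rat) \<Rightarrow> rat \<Rightarrow> rat \<Rightarrow> bool" where
  "bad_pair p a a' \<longleftrightarrow> a \<in> D p \<and> a' \<in> D p \<and> a < a' \<and>
     (((\<forall>K. between p a a' K \<longrightarrow> orb_par p K 1) \<and> p a = None \<and> a' \<notin> ran p) \<or>
      ((\<forall>K. between p a a' K \<longrightarrow> orb_par p K (-1)) \<and> p a' = None \<and> a \<notin> ran p))"

definition neighbours :: "(rat \<rightharpoonup> rat) \<Rightarrow> rat set \<Rightarrow> rat set \<Rightarrow> bool" where
  "neighbours p I J \<longleftrightarrow> I \<in> colored p \<and> J \<in> colored p \<and> oprec I J \<and>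
     \<not> (\<exists>K\<in>colored p. oprec I K \<and> oprec K J)"

definition P_gd :: "(rat \<rightharpoonup> rat) set" where
  "P_gd = {p \<in> PI.
     (\<forall>I s. orb_par p I s \<and> s \<in> {1, -1} \<longrightarrow>
        \<not> (\<exists>a\<in>I. \<exists>a'\<in>I. bad_pair p a a')) \<and>
     (\<forall>I J s t. orb_par p I s \<and> orb_par p J t \<and> s \<in> {1, -1} \<and> t \<in> {1, -1} \<and>
        (neighbours p I J \<or> neighbours p J I) \<longrightarrow> s \<noteq> t)}"

end

theory Submission
  imports Defs
begin

text \<open>
  Extend \<open>p\<close> to an automorphism \<open>h\<close>; if \<open>p \<in> P_gamma \<gamma>\<close>, take for \<open>h\<close> a conjugate of \<open>\<gamma>\<close>
  that agrees on \<open>dom p\<close> with the element of the closure extending \<open>p\<close>. Call \<open>x < y\<close> in \<open>D p\<close>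
  a bad bracket of \<open>h\<close> if all points of \<open>D p\<close> between them have one nonzero parity but \<open>x\<close> and
  \<open>y\<close> lie in different orbitals of \<open>h\<close>. A bad bracket without points of \<open>D p\<close> inside is removed
  by conjugating \<open>h\<close> with an automorphism that copies the maximal run of constant parity ending
  at \<open>x\<close>, compatibly with \<open>h\<close>, into the orbital of \<open>y\<close> just below \<open>y\<close>, and fixes the rest
  of \<open>D p\<close>; the conjugate still extends \<open>p\<close> and has fewer bad brackets.

  Once no bad bracket is left, follow the \<open>h\<close>-orbit of every point of \<open>D p\<close> until it has passed
  the last point of \<open>D p\<close> in its orbital. The resulting finite restriction \<open>q\<close> of \<open>h\<close> extends
  \<open>p\<close>, and its colored orbitals are traces of orbitals of \<open>h\<close>. There is no bad pair, because
  every chain of \<open>q\<close> ends beyond the points of \<open>D p\<close> in its orbital; and two neighbouring colored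
  orbitals of equal nonzero parity would lie in different orbitals of \<open>h\<close> with no parity change in
  between, that is, they would span a bad bracket. As a restriction of a conjugate of \<open>\<gamma>\<close>, \<open>q\<close>
  lies in \<open>P_gamma \<gamma>\<close>; the first claim is the case where \<open>\<gamma>\<close> extends \<open>p\<close>.
\<close>

section \<open>Automorphisms of the rationals\<close>

lemma AutQ_less_iff: "f \<in> AutQ \<Longrightarrow> f x < f y \<longleftrightarrow> x < y"
  unfolding AutQ_def by auto

lemma AutQ_le_iff: "f \<in> AutQ \<Longrightarrow> f x \<le> f y \<longleftrightarrow> x \<le> y"
  using AutQ_less_iff[of f y x] by (simp add: not_less[symmetric])

lemma AutQ_bij: "f \<in> AutQ \<Longrightarrow> bij f"
  unfolding AutQ_def by auto

lemma AutQ_f_inv_f: "f \<in> AutQ \<Longrightarrow> f (inv f x) = x"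
  by (meson AutQ_bij bij_inv_eq_iff)

lemma AutQ_inv_f_f: "f \<in> AutQ \<Longrightarrow> inv f (f x) = x"
  by (metis AutQ_bij bij_def inv_f_f)

lemma AutQ_inv: "f \<in> AutQ \<Longrightarrow> inv f \<in> AutQ"
proof -
  assume f: "f \<in> AutQ"
  have "x < y \<longleftrightarrow> inv f x < inv f y" for x y
    using AutQ_less_iff[OF f, of "inv f x" "inv f y"] by (simp add: AutQ_f_inv_f[OF f])
  then show ?thesis
    using f bij_imp_bij_inv[OF AutQ_bij[OF f]] unfolding AutQ_def by blast
qed

lemma AutQ_comp: "f \<in> AutQ \<Longrightarrow> g \<in> AutQ \<Longrightarrow> f \<circ> g \<in> AutQ"
  unfolding AutQ_def by (auto intro: bij_comp)

lemma AutQ_id: "id \<in> AutQ"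
  unfolding AutQ_def by auto

lemma AutQ_funpow: "f \<in> AutQ \<Longrightarrow> f ^^ n \<in> AutQ"
  by (induction n) (auto simp: AutQ_id AutQ_comp)

lemma AutQ_strict_mono_surj: "strict_mono f \<Longrightarrow> surj f \<Longrightarrow> f \<in> AutQ"
  unfolding AutQ_def bij_def using strict_mono_imp_inj_on strict_mono_less by blast

lemma AutQ_inv_less_iff: "f \<in> AutQ \<Longrightarrow> inv f u < w \<longleftrightarrow> u < f w"
  using AutQ_less_iff[of f "inv f u" w] AutQ_f_inv_f[of f u] by simp

lemma AutQ_funpow_inv_funpow: "f \<in> AutQ \<Longrightarrow> (f ^^ n) ((inv f ^^ n) x) = x"
  using fn_o_inv_fn_is_id[OF AutQ_bij] by (metis comp_apply)

lemma AutQ_funpow_le_cancel: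
  assumes f: "f \<in> AutQ" and le: "(f ^^ m) u \<le> (f ^^ n) v"
  shows "u \<le> (f ^^ (n - m)) v \<or> (f ^^ (m - n)) u \<le> v"
proof (cases "m \<le> n")
  case True
  then have "(f ^^ m) u \<le> (f ^^ m) ((f ^^ (n - m)) v)"
    using le by (metis funpow_add comp_apply le_add_diff_inverse)
  then show ?thesis using AutQ_le_iff[OF AutQ_funpow[OF f]] by blast
next
  case False
  then have "(f ^^ n) ((f ^^ (m - n)) u) \<le> (f ^^ n) v"
    using le by (metis funpow_add comp_apply le_add_diff_inverse nat_le_linear)
  then show ?thesis using AutQ_le_iff[OF AutQ_funpow[OF f]] by blast
qed

lemma funpow_ge_if_up: "f \<in> AutQ \<Longrightarrow> x \<le> f x \<Longrightarrow> x \<le> (f ^^ n) x"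
proof (induction n)
  case (Suc n)
  then have "(f ^^ n) x \<le> (f ^^ n) (f x)" using AutQ_le_iff[OF AutQ_funpow] by blast
  then show ?case using Suc by (simp add: funpow_swap1)
qed simp

lemma funpow_le_if_down: "f \<in> AutQ \<Longrightarrow> f x \<le> x \<Longrightarrow> (f ^^ n) x \<le> x"
proof (induction n)
  case (Suc n)
  then have "(f ^^ n) (f x) \<le> (f ^^ n) x" using AutQ_le_iff[OF AutQ_funpow] by blast
  then show ?case using Suc by (simp add: funpow_swap1)
qed simp

section \<open>Orbitals of an automorphism\<close>

text \<open>\<open>same_orbital h a b\<close>: \<open>a\<close> and \<open>b\<close> lie in the convex hull of one \<open>\<langle>h\<rangle>\<close>-orbit.\<close>

definition orbit_le :: "(rat \<Rightarrow> rat) \<Rightarrow> rat \<Rightarrow> rat \<Rightarrow> bool" where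
  "orbit_le h a b \<longleftrightarrow> (\<exists>m n. (h ^^ m) a \<le> (h ^^ n) b)"

definition same_orbital :: "(rat \<Rightarrow> rat) \<Rightarrow> rat \<Rightarrow> rat \<Rightarrow> bool" where
  "same_orbital h a b \<longleftrightarrow> orbit_le h a b \<and> orbit_le h b a"

definition shift_sgn :: "(rat \<Rightarrow> rat) \<Rightarrow> rat \<Rightarrow> rat" where
  "shift_sgn h a = sgn (h a - a)"

lemma shift_sgn_eq_1_iff: "shift_sgn h a = 1 \<longleftrightarrow> a < h a"
  unfolding shift_sgn_def by (simp add: sgn_if)

lemma shift_sgn_eq_neg1_iff: "shift_sgn h a = -1 \<longleftrightarrow> h a < a"
  unfolding shift_sgn_def by (simp add: sgn_if)

lemma shift_sgn_eq_0_iff: "shift_sgn h a = 0 \<longleftrightarrow> h a = a"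
  unfolding shift_sgn_def by (simp add: sgn_if)

lemma shift_sgn_nonneg_iff: "0 \<le> shift_sgn h a \<longleftrightarrow> a \<le> h a"
  unfolding shift_sgn_def by (simp add: sgn_if)

lemma shift_sgn_neg_iff: "shift_sgn h a < 0 \<longleftrightarrow> h a < a"
  unfolding shift_sgn_def by (simp add: sgn_if)

lemma orbit_le_if_le: "a \<le> b \<Longrightarrow> orbit_le h a b"
  unfolding orbit_le_def by (metis funpow_0)

lemma orbit_le_trans:
  assumes h: "h \<in> AutQ" and "orbit_le h a b" "orbit_le h b c"
  shows "orbit_le h a c"
proof -
  obtain m n m' n' where 1: "(h ^^ m) a \<le> (h ^^ n) b" and 2: "(h ^^ m') b \<le> (h ^^ n') c"
    using assms unfolding orbit_le_def by blast
  have "(h ^^ (m' + m)) a \<le> (h ^^ m') ((h ^^ n) b)"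
    using 1 AutQ_le_iff[OF AutQ_funpow[OF h]] by (simp add: funpow_add)
  also have "\<dots> = (h ^^ n) ((h ^^ m') b)"
    by (metis add.commute comp_apply funpow_add)
  also have "\<dots> \<le> (h ^^ (n + n')) c"
    using 2 AutQ_le_iff[OF AutQ_funpow[OF h]] by (simp add: funpow_add)
  finally show ?thesis unfolding orbit_le_def by blast
qed

lemma same_orbital_refl: "same_orbital h a a"
  unfolding same_orbital_def by (simp add: orbit_le_if_le)

lemma same_orbital_sym: "same_orbital h a b \<Longrightarrow> same_orbital h b a"
  unfolding same_orbital_def by auto

lemma same_orbital_trans:
  "h \<in> AutQ \<Longrightarrow> same_orbital h a b \<Longrightarrow> same_orbital h b c \<Longrightarrow> same_orbital h a c"
  unfolding same_orbital_def using orbit_le_trans by blast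

lemma same_orbital_funpow: "same_orbital h a ((h ^^ k) a)"
  unfolding same_orbital_def orbit_le_def by (metis funpow_0 order_refl)

lemma same_orbital_apply: "same_orbital h a (h a)"
  using same_orbital_funpow[of h a 1] by simp

lemma same_orbital_convex:
  "h \<in> AutQ \<Longrightarrow> same_orbital h a b \<Longrightarrow> a \<le> w \<Longrightarrow> w \<le> b \<Longrightarrow> same_orbital h a w"
  unfolding same_orbital_def using orbit_le_if_le orbit_le_trans by blast

lemma same_orbital_fixed:
  assumes h: "h \<in> AutQ" and ab: "same_orbital h a b" and hb: "h b = b"
  shows "a = b"
proof -
  have fix_pow: "(h ^^ k) b = b" for k
    by (induction k) (simp_all add: hb)
  obtain m n m' n' where "(h ^^ m) a \<le> (h ^^ n) b" "(h ^^ m') b \<le> (h ^^ n') a"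
    using ab unfolding same_orbital_def orbit_le_def by blast
  then have "(h ^^ m) a \<le> (h ^^ m) b" "(h ^^ n') b \<le> (h ^^ n') a"
    by (simp_all add: fix_pow)
  then show ?thesis using AutQ_le_iff[OF AutQ_funpow[OF h]] by (meson order_antisym)
qed

lemma same_orbital_up:
  assumes h: "h \<in> AutQ" and ab: "same_orbital h a b" and a: "a < h a"
  shows "b < h b"
proof (rule ccontr)
  assume "\<not> b < h b"
  then have down: "(h ^^ k) b \<le> b" for k
    using funpow_le_if_down[OF h] by simp
  have up: "a \<le> (h ^^ k) a" for k
    using funpow_ge_if_up[OF h] a by simp
  have mono: "x < y \<Longrightarrow> (h ^^ k) x < (h ^^ k) y" for k x y
    using AutQ_less_iff[OF AutQ_funpow[OF h]] by blast
  consider "a < b" | "b < a" | "a = b" by linarith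
  then show False
  proof cases
    case 1
    obtain m n where "(h ^^ m) b \<le> (h ^^ n) a"
      using ab unfolding same_orbital_def orbit_le_def by blast
    then show False
      using AutQ_funpow_le_cancel[OF h] mono[OF 1] down up by (meson leD order.trans)
  next
    case 2
    obtain m n where "(h ^^ m) a \<le> (h ^^ n) b"
      using ab unfolding same_orbital_def orbit_le_def by blast
    then show False
      using AutQ_funpow_le_cancel[OF h] 2 down up by (meson leD order.trans)
  next
    case 3
    then show False using a \<open>\<not> b < h b\<close> by simp
  qed
qed

lemma same_orbital_down:
  assumes h: "h \<in> AutQ" and ab: "same_orbital h a b" and a: "h a < a"
  shows "h b < b"
  using same_orbital_up[OF h same_orbital_sym[OF ab]] same_orbital_fixed[OF h ab] a
  by (metis less_irrefl not_less_iff_gr_or_eq)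

lemma same_orbital_shift_sgn:
  assumes h: "h \<in> AutQ" and ab: "same_orbital h a b"
  shows "shift_sgn h a = shift_sgn h b"
  using same_orbital_up[OF h ab] same_orbital_down[OF h ab]
    same_orbital_up[OF h same_orbital_sym[OF ab]] same_orbital_down[OF h same_orbital_sym[OF ab]]
  unfolding shift_sgn_def
  by (metis linorder_neqE sgn_pos sgn_neg diff_gt_0_iff_gt diff_less_0_iff_less)

lemma different_orbitals_less:
  assumes h: "h \<in> AutQ" and uv: "\<not> same_orbital h u v" "u < v"
    and u': "same_orbital h u u'" and v': "same_orbital h v v'"
  shows "u' < v'"
proof (rule ccontr)
  assume "\<not> u' < v'"
  show False
  proof (cases "v \<le> u'")
    case True
    then have "same_orbital h u v" using same_orbital_convex[OF h u'] uv(2) by simp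
    then show False using uv(1) by blast
  next
    case False
    have "same_orbital h v' u'"
      using same_orbital_convex[OF h same_orbital_sym[OF v']] \<open>\<not> u' < v'\<close> False by simp
    then have "same_orbital h u v"
      using u' v' same_orbital_sym same_orbital_trans[OF h] by meson
    then show False using uv(1) by blast
  qed
qed

lemma orbit_le_inv_imp:
  assumes f: "f \<in> AutQ" and le: "orbit_le (inv f) a b"
  shows "orbit_le f a b"
proof -
  obtain m n where "(inv f ^^ m) a \<le> (inv f ^^ n) b"
    using le unfolding orbit_le_def by blast
  then have "(f ^^ (n + m)) ((inv f ^^ m) a) \<le> (f ^^ (m + n)) ((inv f ^^ n) b)"
    using AutQ_le_iff[OF AutQ_funpow[OF f]] by (simp add: add.commute)
  then have "(f ^^ n) a \<le> (f ^^ m) b"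
    by (simp add: funpow_add AutQ_funpow_inv_funpow[OF f])
  then show ?thesis unfolding orbit_le_def by blast
qed

lemma same_orbital_inv: "h \<in> AutQ \<Longrightarrow> same_orbital (inv h) a b \<longleftrightarrow> same_orbital h a b"
proof -
  assume h: "h \<in> AutQ"
  have "orbit_le (inv h) a b \<longleftrightarrow> orbit_le h a b" for a b
    using orbit_le_inv_imp[OF h] orbit_le_inv_imp[OF AutQ_inv[OF h]]
    by (auto simp: inv_inv_eq[OF AutQ_bij[OF h]])
  then show ?thesis unfolding same_orbital_def by simp
qed

lemma funpow_conj:
  "\<rho> \<in> AutQ \<Longrightarrow> ((inv \<rho> \<circ> h \<circ> \<rho>) ^^ n) x = inv \<rho> ((h ^^ n) (\<rho> x))"
  by (induction n arbitrary: x) (simp_all add: AutQ_inv_f_f AutQ_f_inv_f)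

lemma same_orbital_conj:
  assumes "\<rho> \<in> AutQ"
  shows "same_orbital (inv \<rho> \<circ> h \<circ> \<rho>) a b \<longleftrightarrow> same_orbital h (\<rho> a) (\<rho> b)"
proof -
  have "orbit_le (inv \<rho> \<circ> h \<circ> \<rho>) u v \<longleftrightarrow> orbit_le h (\<rho> u) (\<rho> v)" for u v
    unfolding orbit_le_def funpow_conj[OF assms] AutQ_le_iff[OF AutQ_inv[OF assms]] ..
  then show ?thesis unfolding same_orbital_def by simp
qed

section \<open>Extension of finite partial isomorphisms and conjugation\<close>

definition stretch_above :: "rat \<Rightarrow> rat \<Rightarrow> rat \<Rightarrow> rat \<Rightarrow> rat" where
  "stretch_above c u t x = (if x \<le> c then x else c + (x - c) * ((t - c) / (u - c)))"

lemma AutQ_stretch_above: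
  assumes "c < u" "c < t"
  shows "stretch_above c u t \<in> AutQ"
proof (rule AutQ_strict_mono_surj)
  define k where "k = (t - c) / (u - c)"
  have k: "0 < k" using assms unfolding k_def by simp
  have s: "stretch_above c u t x = (if x \<le> c then x else c + (x - c) * k)" for x
    unfolding stretch_above_def k_def ..
  show "strict_mono (stretch_above c u t)"
  proof (rule strict_monoI)
    fix x y :: rat
    assume xy: "x < y"
    show "stretch_above c u t x < stretch_above c u t y"
    proof (cases "y \<le> c")
      case False
      have "c < c + (y - c) * k" using k False by simp
      moreover have "c < x \<Longrightarrow> (x - c) * k < (y - c) * k"
        using k xy by (simp add: mult_strict_right_mono)
      ultimately show ?thesis using False unfolding s by auto
    qed (use xy in \<open>auto simp: s\<close>)
  qed
  show "surj (stretch_above c u t)"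
  proof (rule surjI)
    fix y :: rat
    show "stretch_above c u t (if y \<le> c then y else c + (y - c) / k) = y"
      using k unfolding s by (auto simp: field_simps)
  qed
qed

lemma strict_mono_on_extends_to_AutQ:
  assumes "finite S" "strict_mono_on S f"
  shows "\<exists>\<rho>\<in>AutQ. \<forall>x\<in>S. \<rho> x = f x"
  using assms
proof (induction S rule: finite_linorder_max_induct)
  case empty
  then show ?case using AutQ_id by blast
next
  case (insert b A)
  have "strict_mono_on A f"
    using insert.prems unfolding strict_mono_on_def by blast
  then obtain \<rho> where \<rho>: "\<rho> \<in> AutQ" "\<forall>x\<in>A. \<rho> x = f x"
    using insert.IH by blast
  show ?case
  proof (cases "A = {}")
    case True
    have "(\<lambda>x. x + (f b - b)) \<in> AutQ"
      by (rule AutQ_strict_mono_surj)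
        (auto simp: strict_mono_def intro: surjI[of _ "\<lambda>x. x - (f b - b)"])
    then show ?thesis using True by (intro bexI[of _ "\<lambda>x. x + (f b - b)"]) auto
  next
    case False
    let ?c = "f (Max A)"
    have m: "Max A \<in> A" "Max A < b" using False insert.hyps by auto
    have cu: "?c < \<rho> b" using \<rho> m AutQ_less_iff[OF \<rho>(1), of "Max A" b] by simp
    have ct: "?c < f b" using strict_mono_onD[OF insert.prems] m by simp
    have below: "f x \<le> ?c" if "x \<in> A" for x
    proof (cases "x = Max A")
      case False
      then have "x < Max A" using Max_ge[OF insert.hyps(1) that] by simp
      then show ?thesis using strict_mono_onD[OF insert.prems, of x "Max A"] that m by simp
    qed simp
    have "(stretch_above ?c (\<rho> b) (f b) \<circ> \<rho>) x = f x" if "x \<in> insert b A" for x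
    proof (cases "x = b")
      case True
      then show ?thesis using cu unfolding stretch_above_def by simp
    next
      case False
      then show ?thesis using that \<rho> below unfolding stretch_above_def by simp
    qed
    then show ?thesis using AutQ_comp[OF AutQ_stretch_above[OF cu ct] \<rho>(1)] by blast
  qed
qed

definition conjs :: "(rat \<Rightarrow> rat) \<Rightarrow> (rat \<Rightarrow> rat) set" where
  "conjs h = {\<rho> \<circ> h \<circ> inv \<rho> | \<rho>. \<rho> \<in> AutQ}"

lemma conjs_refl: "h \<in> conjs h"
  unfolding conjs_def using AutQ_id by (auto intro!: exI[of _ id])

lemma conjs_trans:
  assumes "h1 \<in> conjs h" "h2 \<in> conjs h1"
  shows "h2 \<in> conjs h"
proof -
  obtain \<rho>1 \<rho>2 where \<rho>: "\<rho>1 \<in> AutQ" "h1 = \<rho>1 \<circ> h \<circ> inv \<rho>1" "\<rho>2 \<in> AutQ" "h2 = \<rho>2 \<circ> h1 \<circ> inv \<rho>2"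
    using assms unfolding conjs_def by blast
  then have "h2 = (\<rho>2 \<circ> \<rho>1) \<circ> h \<circ> inv (\<rho>2 \<circ> \<rho>1)"
    using o_inv_distrib[OF AutQ_bij AutQ_bij] by (simp add: o_assoc)
  then show ?thesis unfolding conjs_def using AutQ_comp \<rho> by blast
qed

lemma inv_conj_in_conjs:
  assumes "\<rho> \<in> AutQ"
  shows "inv \<rho> \<circ> h \<circ> \<rho> \<in> conjs h"
proof -
  have "inv \<rho> \<circ> h \<circ> \<rho> = inv \<rho> \<circ> h \<circ> inv (inv \<rho>)"
    using inv_inv_eq[OF AutQ_bij[OF assms]] by simp
  then show ?thesis unfolding conjs_def using AutQ_inv[OF assms] by blast
qed

lemma AutQ_conjs: "h \<in> AutQ \<Longrightarrow> h' \<in> conjs h \<Longrightarrow> h' \<in> AutQ"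
  unfolding conjs_def using AutQ_comp AutQ_inv by blast

lemma conjs_subset_Cl: "\<gamma> \<in> AutQ \<Longrightarrow> conjs \<gamma> \<subseteq> Cl \<gamma>"
proof
  fix h
  assume "\<gamma> \<in> AutQ" "h \<in> conjs \<gamma>"
  moreover from this obtain \<rho> where "\<rho> \<in> AutQ" "h = \<rho> \<circ> \<gamma> \<circ> inv \<rho>"
    unfolding conjs_def by blast
  ultimately show "h \<in> Cl \<gamma>" unfolding Cl_def using AutQ_conjs by blast
qed

section \<open>Copying a finite configuration into an orbital\<close>

text \<open>Points are placed from the top down;
  the last clause keeps room below \<open>e ` A\<close> for the preimages still to be placed.\<close>

definition realizes ::
    "(rat \<Rightarrow> rat) \<Rightarrow> rat \<Rightarrow> (rat \<times> rat) set \<Rightarrow> rat set \<Rightarrow> (rat \<Rightarrow> rat) \<Rightarrow> bool" where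
  "realizes g y P A e \<longleftrightarrow> strict_mono_on A e \<and>
     (\<forall>x\<in>A. same_orbital g y (e x) \<and> e x < y) \<and>
     (\<forall>(a, a')\<in>P. a \<in> A \<longrightarrow> a' \<in> A \<longrightarrow> e a' = g (e a)) \<and>
     (\<forall>(a, a')\<in>P. a \<notin> A \<longrightarrow> a' \<in> A \<longrightarrow> (\<forall>x\<in>A. e a' < g (e x)))"

context
  fixes g :: "rat \<Rightarrow> rat" and y :: rat and P :: "(rat \<times> rat) set" and S :: "rat set"
  assumes g: "g \<in> AutQ" and gy: "y < g y" and fin: "finite S"
    and P_in: "\<forall>(a, a')\<in>P. a \<in> S \<and> a' \<in> S \<and> a < a'"
    and P_mono: "\<forall>(a, a')\<in>P. \<forall>(b, b')\<in>P. a < b \<longleftrightarrow> a' < b'"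
begin

lemma moves_up_in_orbital: "same_orbital g y z \<Longrightarrow> z < g z"
  using same_orbital_up[OF g _ gy] by blast

lemma P_functional:
  assumes "(a, a1) \<in> P" "(a, a2) \<in> P"
  shows "a1 = a2"
proof -
  have "a < a \<longleftrightarrow> a1 < a2" "a < a \<longleftrightarrow> a2 < a1"
    using P_mono assms by fast+
  then show ?thesis by simp
qed

lemma realizes_insert_below:
  assumes e: "realizes g y P A e" and bA: "\<forall>x\<in>A. b < x"
    and v: "\<forall>x\<in>A. v < e x" "same_orbital g y v" "v < y"
    and succ: "\<forall>b'. (b, b') \<in> P \<longrightarrow> b' \<in> A \<and> e b' = g v"
    and pending: "\<forall>(a, a')\<in>P. a \<notin> insert b A \<longrightarrow> a' \<in> A \<longrightarrow> e a' < g v"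
  shows "realizes g y P (insert b A) (e(b := v))"
proof -
  have bnA: "b \<notin> A" using bA by blast
  have mono: "strict_mono_on A e" and orb: "\<forall>x\<in>A. same_orbital g y (e x) \<and> e x < y"
    and steps: "\<forall>(a, a')\<in>P. a \<in> A \<longrightarrow> a' \<in> A \<longrightarrow> e a' = g (e a)"
    and room: "\<forall>(a, a')\<in>P. a \<notin> A \<longrightarrow> a' \<in> A \<longrightarrow> (\<forall>x\<in>A. e a' < g (e x))"
    using e unfolding realizes_def by blast+
  have "strict_mono_on (insert b A) (e(b := v))"
    using mono v(1) bA bnA unfolding strict_mono_on_def by auto
  moreover have "\<forall>x\<in>insert b A. same_orbital g y ((e(b := v)) x) \<and> (e(b := v)) x < y"
    using orb v bnA by auto
  moreover have "e' a' = g (e' a)"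
    if "(a, a') \<in> P" "a \<in> insert b A" "a' \<in> insert b A" and e': "e' = e(b := v)" for a a' e'
  proof -
    have "a < a'" using that P_in by blast
    then show ?thesis
      using that bA bnA succ steps by (cases "a = b") auto
  qed
  moreover have "e' a' < g (e' x)"
    if "(a, a') \<in> P" "a \<notin> insert b A" "a' \<in> insert b A" "x \<in> insert b A"
      and e': "e' = e(b := v)" for a a' x e'
  proof (cases "a' = b")
    case True
    have "v < g v" using moves_up_in_orbital v(2) by blast
    moreover have "v < g (e x)" if "x \<in> A"
      using v(1) that moves_up_in_orbital orb by (meson order.strict_trans)
    ultimately show ?thesis using True that bnA by auto
  next
    case False
    then show ?thesis using that room pending bnA by auto
  qed
  ultimately show ?thesis unfolding realizes_def by blast
qed

lemma realizes_insert_preimage: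
  assumes e: "realizes g y P A e" and bA: "\<forall>x\<in>A. b < x" and bb': "(b, b') \<in> P" "b' \<in> A"
    and pending_less: "\<forall>(a, a')\<in>P. a \<notin> insert b A \<longrightarrow> a < b"
  shows "realizes g y P (insert b A) (e(b := inv g (e b')))"
proof -
  let ?v = "inv g (e b')"
  have mono: "strict_mono_on A e" and orb: "\<forall>x\<in>A. same_orbital g y (e x) \<and> e x < y"
    and room: "\<forall>(a, a')\<in>P. a \<notin> A \<longrightarrow> a' \<in> A \<longrightarrow> (\<forall>x\<in>A. e a' < g (e x))"
    using e unfolding realizes_def by blast+
  have gv: "g ?v = e b'" using AutQ_f_inv_f[OF g] .
  have "b \<notin> A" using bA by blast
  then have "\<forall>x\<in>A. ?v < e x" using room bb' AutQ_inv_less_iff[OF g] by blast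
  moreover have v_orb: "same_orbital g y ?v"
    using orb bb'(2) same_orbital_apply[of g ?v] gv same_orbital_sym same_orbital_trans[OF g]
    by metis
  moreover have "?v < y" using moves_up_in_orbital[OF v_orb] gv orb bb'(2) by fastforce
  moreover have "\<forall>b''. (b, b'') \<in> P \<longrightarrow> b'' \<in> A \<and> e b'' = g ?v"
    using P_functional[OF bb'(1)] bb'(2) gv by auto
  moreover have "e a' < g ?v" if "(a, a') \<in> P" "a \<notin> insert b A" "a' \<in> A" for a a'
  proof -
    have "a' < b'" using pending_less that(1,2) P_mono bb'(1) by fast
    then show ?thesis using strict_mono_onD[OF mono that(3) bb'(2)] gv by simp
  qed
  ultimately show ?thesis using realizes_insert_below[OF e bA] by blast
qed

lemma exists_value_below_realization:
  assumes e: "realizes g y P A e" and fA: "finite A"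
  shows "\<exists>v. (\<forall>x\<in>A. v < e x) \<and> same_orbital g y v \<and> v < y \<and>
             (\<forall>(a, a')\<in>P. a \<notin> A \<longrightarrow> a' \<in> A \<longrightarrow> e a' < g v)"
proof (cases "A = {}")
  case True
  have "same_orbital g y (inv g y)"
    using same_orbital_apply[of g "inv g y"] AutQ_f_inv_f[OF g] same_orbital_sym by metis
  moreover have "inv g y < y" using gy AutQ_inv_less_iff[OF g] by blast
  ultimately show ?thesis using True by blast
next
  case False
  let ?m = "e (Min A)"
  have mono: "strict_mono_on A e" and orb: "\<forall>x\<in>A. same_orbital g y (e x) \<and> e x < y"
    and room: "\<forall>(a, a')\<in>P. a \<notin> A \<longrightarrow> a' \<in> A \<longrightarrow> (\<forall>x\<in>A. e a' < g (e x))"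
    using e unfolding realizes_def by blast+
  have min: "Min A \<in> A" using Min_in[OF fA False] .
  have m_le: "?m \<le> e x" if "x \<in> A" for x
    using Min_le[OF fA that] strict_mono_onD[OF mono min that] by (cases "x = Min A") auto
  define Lo where "Lo = inv g ` insert ?m {e a' | a a'. (a, a') \<in> P \<and> a \<notin> A \<and> a' \<in> A}"
  have "finite Lo"
  proof -
    have "{e a' | a a'. (a, a') \<in> P \<and> a \<notin> A \<and> a' \<in> A} \<subseteq> e ` A" by blast
    then show ?thesis unfolding Lo_def using fA finite_subset by blast
  qed
  have step: "same_orbital g (inv g ?m) ?m"
    using same_orbital_apply[of g "inv g ?m"] AutQ_f_inv_f[OF g] by simp
  have "l < ?m" if "l \<in> Lo" for l
  proof -
    have "inv g ?m < ?m" using moves_up_in_orbital orb min AutQ_inv_less_iff[OF g] by blast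
    moreover have "inv g (e a') < ?m" if "(a, a') \<in> P" "a \<notin> A" "a' \<in> A" for a a'
      using room that min AutQ_inv_less_iff[OF g] by blast
    ultimately show ?thesis using \<open>l \<in> Lo\<close> unfolding Lo_def by blast
  qed
  then obtain v where v: "Max Lo < v" "v < ?m"
    using dense Max_in[OF \<open>finite Lo\<close>] unfolding Lo_def by blast
  have Lo_less: "l < v" if "l \<in> Lo" for l
    using Max_ge[OF \<open>finite Lo\<close> that] v by simp
  have "inv g ?m < v" using Lo_less unfolding Lo_def by blast
  then have "same_orbital g (inv g ?m) v"
    using same_orbital_convex[OF g step less_imp_le less_imp_le[OF v(2)]] by blast
  then have "same_orbital g y v"
    using orb min step same_orbital_trans[OF g] same_orbital_sym by meson
  moreover have "\<forall>x\<in>A. v < e x" using v m_le by fastforce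
  moreover have "v < y" using v orb min by fastforce
  moreover have "e a' < g v" if "(a, a') \<in> P" "a \<notin> A" "a' \<in> A" for a a'
  proof -
    have "inv g (e a') \<in> Lo" using that unfolding Lo_def by blast
    then show ?thesis using Lo_less AutQ_inv_less_iff[OF g] by blast
  qed
  ultimately show ?thesis by blast
qed

lemma realizes_insert:
  assumes e: "realizes g y P A e" and bA: "\<forall>x\<in>A. b < x"
    and up: "\<forall>a\<in>S. \<forall>x\<in>insert b A. x \<le> a \<longrightarrow> a \<in> insert b A"
    and sub: "insert b A \<subseteq> S"
  shows "\<exists>e'. realizes g y P (insert b A) e'"
proof (cases "\<exists>b'. (b, b') \<in> P")
  case True
  then obtain b' where bb': "(b, b') \<in> P" by blast
  then have "b' \<in> S" "b < b'" using P_in by blast+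
  then have "b' \<in> A" using up by force
  moreover have "\<forall>(a, a')\<in>P. a \<notin> insert b A \<longrightarrow> a < b"
    using up P_in by fastforce
  ultimately show ?thesis using realizes_insert_preimage[OF e bA bb'] by blast
next
  case False
  obtain v where "\<forall>x\<in>A. v < e x" "same_orbital g y v" "v < y"
    "\<forall>(a, a')\<in>P. a \<notin> A \<longrightarrow> a' \<in> A \<longrightarrow> e a' < g v"
    using exists_value_below_realization[OF e] finite_subset[OF sub fin] by auto
  then have "realizes g y P (insert b A) (e(b := v))"
    using realizes_insert_below[OF e bA] False by blast
  then show ?thesis by blast
qed

lemma realizes_upper_set:
  assumes "finite A" "A \<subseteq> S" "\<forall>a\<in>S. \<forall>x\<in>A. x \<le> a \<longrightarrow> a \<in> A"
  shows "\<exists>e. realizes g y P A e"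
  using assms
proof (induction A rule: finite_linorder_min_induct)
  case empty
  show ?case unfolding realizes_def strict_mono_on_def by simp
next
  case (insert b A)
  have "\<forall>a\<in>S. \<forall>x\<in>A. x \<le> a \<longrightarrow> a \<in> A"
    using insert.prems(2) insert.hyps(2) by fastforce
  then obtain e where "realizes g y P A e" using insert by blast
  then show ?case using realizes_insert insert.hyps(2) insert.prems by blast
qed

lemma exists_orbital_embedding:
  "\<exists>e. strict_mono_on S e \<and> (\<forall>x\<in>S. same_orbital g y (e x) \<and> e x < y) \<and>
       (\<forall>(a, a')\<in>P. e a' = g (e a))"
proof -
  obtain e where "realizes g y P S e" using realizes_upper_set[OF fin] by blast
  then show ?thesis using P_in unfolding realizes_def by fast
qed

end

section \<open>Partial isomorphisms below an automorphism\<close>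

lemma finite_D: "p \<in> PI \<Longrightarrow> finite (D p)"
  unfolding D_def PI_def by (auto simp: finite_ran)

lemma map_le_Some_comp_iff: "p \<subseteq>\<^sub>m Some \<circ> h \<longleftrightarrow> (\<forall>x\<in>dom p. p x = Some (h x))"
  unfolding map_le_def by simp

lemma map_le_Some_compD: "p \<subseteq>\<^sub>m Some \<circ> h \<Longrightarrow> p x = Some c \<Longrightarrow> c = h x"
  unfolding map_le_Some_comp_iff by (metis domI option.inject)

lemma D_if_map_eq_Some: "p c = Some d \<Longrightarrow> c \<in> D p \<and> d \<in> D p"
  unfolding D_def by (auto intro: ranI)

lemma psim_sym: "psim p a b \<Longrightarrow> psim p b a"
  unfolding psim_def by (rule equivclp_sym)

lemma psim_trans: "psim p a b \<Longrightarrow> psim p b c \<Longrightarrow> psim p a c"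
  unfolding psim_def by (rule equivclp_trans)

lemma psim_if_prel: "prel p a b \<Longrightarrow> psim p a b"
  unfolding psim_def by blast

lemma in_orbital: "a \<in> orbital p a"
  unfolding orbital_def psim_def by simp

lemma orbital_eq: "psim p a b \<Longrightarrow> orbital p a = orbital p b"
  unfolding orbital_def using psim_sym psim_trans by blast

lemma colored_cases: "I \<in> colored p \<Longrightarrow> \<exists>a\<in>D p. I = orbital p a"
  unfolding colored_def by blast

lemma mem_orbital_iff: "b \<in> orbital p a \<longleftrightarrow> psim p a b"
  unfolding orbital_def by simp

lemma par_eq_shift_sgn:
  assumes h: "h \<in> AutQ" and ph: "p \<subseteq>\<^sub>m Some \<circ> h" and x: "x \<in> D p"
  shows "par p x = shift_sgn h x"
proof (cases "x \<in> dom p")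
  case True
  then have "the (p x) = h x" using ph unfolding map_le_Some_comp_iff by simp
  then show ?thesis using True unfolding par_def shift_sgn_def by simp
next
  case False
  then obtain c where c: "p c = Some x" using x unfolding D_def ran_def by auto
  have xc: "x = h c" using map_le_Some_compD[OF ph c] .
  have "c' = c" if "p c' = Some x" for c'
    using map_le_Some_compD[OF ph that] xc AutQ_inv_f_f[OF h] by metis
  then have "(THE c. p c = Some x) = c" using c by blast
  moreover have "x \<in> ran p" using c by (rule ranI)
  ultimately have "par p x = sgn (x - c)" using False unfolding par_def by simp
  also have "\<dots> = shift_sgn h c" unfolding shift_sgn_def using xc by simp
  also have "\<dots> = shift_sgn h x" using same_orbital_shift_sgn[OF h same_orbital_apply] xc by simp
  finally show ?thesis .
qed

lemma same_orbital_if_between_step: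
  assumes h: "h \<in> AutQ" and v: "min c (h c) \<le> v" "v \<le> max c (h c)"
  shows "same_orbital h c v"
proof (cases "c \<le> h c")
  case True
  then show ?thesis using same_orbital_convex[OF h same_orbital_apply] v by simp
next
  case False
  then have "same_orbital h (h c) v"
    using same_orbital_convex[OF h same_orbital_sym[OF same_orbital_apply]] v by simp
  then show ?thesis using same_orbital_apply same_orbital_trans[OF h] by blast
qed

lemma prel_within_step:
  "prel p a b \<Longrightarrow> a = b \<or> (\<exists>c d. p c = Some d \<and> a \<in> {min c d..max c d} \<and> b \<in> {min c d..max c d})"
  unfolding prel_def by (elim disjE conjE exE) (force simp: min_le_iff_disj le_max_iff_disj)+

lemma prel_same_orbital:
  assumes h: "h \<in> AutQ" and ph: "p \<subseteq>\<^sub>m Some \<circ> h" and ab: "prel p a b"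
  shows "same_orbital h a b"
  using prel_within_step[OF ab]
proof (elim disjE exE conjE)
  fix c d
  assume "p c = Some d" "a \<in> {min c d..max c d}" "b \<in> {min c d..max c d}"
  then have "same_orbital h c a" "same_orbital h c b"
    using map_le_Some_compD[OF ph] same_orbital_if_between_step[OF h] by auto
  then show ?thesis using same_orbital_sym same_orbital_trans[OF h] by blast
qed (simp add: same_orbital_refl)

lemma psim_same_orbital:
  assumes h: "h \<in> AutQ" and ph: "p \<subseteq>\<^sub>m Some \<circ> h" and ab: "psim p a b"
  shows "same_orbital h a b"
  using ab unfolding psim_def
proof (induction rule: equivclp_induct)
  case base
  show ?case by (rule same_orbital_refl)
next
  case (step y z)
  then have "same_orbital h y z"
    using prel_same_orbital[OF h ph] same_orbital_sym by blast
  then show ?case using step.IH same_orbital_trans[OF h] by blast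
qed

lemma orbital_same_orbital:
  "h \<in> AutQ \<Longrightarrow> p \<subseteq>\<^sub>m Some \<circ> h \<Longrightarrow> w \<in> orbital p a \<Longrightarrow> same_orbital h a w"
  unfolding orbital_def using psim_same_orbital by blast

lemma oprec_orbitals:
  assumes h: "h \<in> AutQ" and ph: "p \<subseteq>\<^sub>m Some \<circ> h"
    and a: "same_orbital h a a'" and b: "same_orbital h b b'"
    and ab: "\<not> same_orbital h a' b'" "a' < b'"
  shows "oprec (orbital p a) (orbital p b)"
  unfolding oprec_def
proof (intro ballI)
  fix w v assume "w \<in> orbital p a" "v \<in> orbital p b"
  then have "same_orbital h a w" "same_orbital h b v" using orbital_same_orbital[OF h ph] by blast+
  then have "same_orbital h a' w" "same_orbital h b' v"
    using same_orbital_trans[OF h same_orbital_sym] a b by blast+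
  then show "w < v" using different_orbitals_less[OF h ab] by blast
qed

section \<open>Truncating a consolidated automorphism\<close>

definition bad_bracket :: "(rat \<Rightarrow> rat) \<Rightarrow> (rat \<rightharpoonup> rat) \<Rightarrow> rat \<Rightarrow> rat \<Rightarrow> bool" where
  "bad_bracket h p x y \<longleftrightarrow> x \<in> D p \<and> y \<in> D p \<and> x < y \<and> par p x \<noteq> 0 \<and>
     (\<forall>z\<in>D p. x \<le> z \<and> z \<le> y \<longrightarrow> par p z = par p x) \<and> \<not> same_orbital h x y"

definition consolidated :: "(rat \<Rightarrow> rat) \<Rightarrow> (rat \<rightharpoonup> rat) \<Rightarrow> bool" where
  "consolidated h p \<longleftrightarrow> (\<forall>x y. \<not> bad_bracket h p x y)"

locale truncation =
  fixes h :: "rat \<Rightarrow> rat" and p :: "rat \<rightharpoonup> rat"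
  assumes h: "h \<in> AutQ" and p: "p \<in> PI" and ph: "p \<subseteq>\<^sub>m Some \<circ> h"
    and consolidated: "consolidated h p"
begin

definition orbital_part :: "rat \<Rightarrow> rat set" where
  "orbital_part x = {z \<in> D p. same_orbital h x z}"

definition last_point :: "rat \<Rightarrow> rat" where
  "last_point x = (if shift_sgn h x < 0 then Min (orbital_part x) else Max (orbital_part x))"

definition steps :: "rat \<Rightarrow> nat" where
  "steps x = (if shift_sgn h x < 0 then (LEAST n. (h ^^ n) x \<le> last_point x)
              else (LEAST n. last_point x \<le> (h ^^ n) x))"

definition trace :: "rat set" where
  "trace = (\<Union>x\<in>D p. {(h ^^ k) x | k. k \<le> steps x})"

definition q :: "rat \<rightharpoonup> rat" where
  "q z = (if z \<in> trace then Some (h z) else None)"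

lemma finite_D_p: "finite (D p)" using finite_D[OF p] .

lemma finite_orbital_part: "finite (orbital_part x)"
  unfolding orbital_part_def using finite_D_p by auto

lemma mem_orbital_part_self: "x \<in> D p \<Longrightarrow> x \<in> orbital_part x"
  unfolding orbital_part_def using same_orbital_refl by auto

lemma orbital_part_eq: "same_orbital h x x' \<Longrightarrow> orbital_part x = orbital_part x'"
  unfolding orbital_part_def using same_orbital_trans[OF h] same_orbital_sym by blast

lemma last_point_eq: "same_orbital h x x' \<Longrightarrow> last_point x = last_point x'"
  unfolding last_point_def using orbital_part_eq same_orbital_shift_sgn[OF h] by metis

lemma last_point_in: "x \<in> D p \<Longrightarrow> last_point x \<in> orbital_part x"
  unfolding last_point_def using finite_orbital_part mem_orbital_part_self
  by (auto intro: Min_in Max_in)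

lemma same_orbital_last_point: "x \<in> D p \<Longrightarrow> same_orbital h x (last_point x)"
  using last_point_in unfolding orbital_part_def by auto

lemma exists_steps_up:
  assumes "x \<in> D p" "0 \<le> shift_sgn h x"
  shows "\<exists>n. last_point x \<le> (h ^^ n) x"
proof -
  let ?M = "last_point x"
  obtain m n where mn: "(h ^^ m) ?M \<le> (h ^^ n) x"
    using same_orbital_last_point[OF assms(1)] unfolding same_orbital_def orbit_le_def by blast
  have "0 \<le> shift_sgn h ?M"
    using assms same_orbital_shift_sgn[OF h same_orbital_last_point[OF assms(1)]] by simp
  then have "?M \<le> (h ^^ m) ?M" using funpow_ge_if_up[OF h] shift_sgn_nonneg_iff by blast
  then show ?thesis using mn order.trans by blast
qed

lemma exists_steps_down:
  assumes "x \<in> D p" "shift_sgn h x < 0"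
  shows "\<exists>n. (h ^^ n) x \<le> last_point x"
proof -
  let ?M = "last_point x"
  obtain m n where mn: "(h ^^ m) x \<le> (h ^^ n) ?M"
    using same_orbital_last_point[OF assms(1)] unfolding same_orbital_def orbit_le_def by blast
  have "shift_sgn h ?M < 0"
    using assms same_orbital_shift_sgn[OF h same_orbital_last_point[OF assms(1)]] by simp
  then have "(h ^^ n) ?M \<le> ?M" using funpow_le_if_down[OF h] shift_sgn_neg_iff less_imp_le by blast
  then show ?thesis using mn order.trans by blast
qed

lemma steps_up:
  assumes "x \<in> D p" "0 \<le> shift_sgn h x"
  shows "last_point x \<le> (h ^^ steps x) x" and "k < steps x \<Longrightarrow> (h ^^ k) x < last_point x"
proof -
  have e: "steps x = (LEAST n. last_point x \<le> (h ^^ n) x)"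
    unfolding steps_def using assms(2) by simp
  show "last_point x \<le> (h ^^ steps x) x"
    unfolding e using exists_steps_up[OF assms] by (rule LeastI_ex)
  show "k < steps x \<Longrightarrow> (h ^^ k) x < last_point x"
    unfolding e using not_less_Least by force
qed

lemma steps_down:
  assumes "x \<in> D p" "shift_sgn h x < 0"
  shows "(h ^^ steps x) x \<le> last_point x" and "k < steps x \<Longrightarrow> last_point x < (h ^^ k) x"
proof -
  have e: "steps x = (LEAST n. (h ^^ n) x \<le> last_point x)"
    unfolding steps_def using assms(2) by simp
  show "(h ^^ steps x) x \<le> last_point x"
    unfolding e using exists_steps_down[OF assms] by (rule LeastI_ex)
  show "k < steps x \<Longrightarrow> last_point x < (h ^^ k) x"
    unfolding e using not_less_Least by force
qed

lemma finite_trace: "finite trace"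
  unfolding trace_def using finite_D_p by auto

lemma dom_q: "dom q = trace" unfolding q_def dom_def by auto

lemma q_le_h: "q \<subseteq>\<^sub>m Some \<circ> h"
  unfolding map_le_def q_def by (auto split: if_splits)

lemma q_PI: "q \<in> PI"
  unfolding PI_def using finite_trace dom_q AutQ_less_iff[OF h] unfolding q_def
  by (auto split: if_splits)

lemma D_subset_trace: "x \<in> D p \<Longrightarrow> x \<in> trace"
  unfolding trace_def by (auto intro!: bexI[of _ x] exI[of _ 0])

lemma p_le_q: "p \<subseteq>\<^sub>m q"
  unfolding map_le_def
proof
  fix x assume "x \<in> dom p"
  then have "x \<in> trace" using D_subset_trace unfolding D_def by auto
  then show "p x = q x" using ph \<open>x \<in> dom p\<close> unfolding q_def map_le_Some_comp_iff by auto
qed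

lemma D_subset_D_q: "x \<in> D p \<Longrightarrow> x \<in> D q"
proof -
  assume x: "x \<in> D p"
  show "x \<in> D q"
  proof (cases "x \<in> dom p")
    case True then show ?thesis using D_subset_trace dom_q x unfolding D_def by auto
  next
    case False
    then obtain c where c: "p c = Some x" using x unfolding D_def ran_def by auto
    then have "c \<in> trace" using D_subset_trace unfolding D_def by (auto intro: domI)
    moreover have "x = h c" using map_le_Some_compD[OF ph c] .
    ultimately have "q c = Some x" unfolding q_def by auto
    then show ?thesis unfolding D_def by (auto intro: ranI)
  qed
qed

lemma D_q_cases:
  assumes "z \<in> D q"
  shows "\<exists>x\<in>D p. \<exists>k\<le>Suc (steps x). z = (h ^^ k) x"
proof (cases "z \<in> trace")
  case True then show ?thesis unfolding trace_def using le_SucI by blast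
next
  case False
  then have "z \<in> ran q" using assms dom_q unfolding D_def by auto
  then obtain t where t: "q t = Some z" unfolding ran_def by auto
  then have "t \<in> trace" "z = h t" unfolding q_def by (auto split: if_splits)
  then obtain x k where "x \<in> D p" "k \<le> steps x" "t = (h ^^ k) x" unfolding trace_def by auto
  then show ?thesis using \<open>z = h t\<close> by (intro bexI[of _ x] exI[of _ "Suc k"]) auto
qed

lemma D_q_end:
  assumes "z \<in> D q" "q z = None"
  shows "\<exists>x\<in>D p. z = (h ^^ Suc (steps x)) x"
proof -
  have "z \<notin> trace" using assms dom_q by auto
  then have "z \<in> ran q" using assms dom_q unfolding D_def by auto
  then obtain t where t: "q t = Some z" unfolding ran_def by auto
  then have "t \<in> trace" "z = h t" unfolding q_def by (auto split: if_splits)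
  then obtain x k where xk: "x \<in> D p" "k \<le> steps x" "t = (h ^^ k) x" unfolding trace_def by auto
  have "k = steps x"
  proof (rule ccontr)
    assume "k \<noteq> steps x"
    then have "Suc k \<le> steps x" using xk by auto
    moreover have "z = (h ^^ Suc k) x" using xk \<open>z = h t\<close> by simp
    ultimately have "z \<in> trace" using xk unfolding trace_def by blast
    then show False using \<open>z \<notin> trace\<close> by auto
  qed
  then show ?thesis using xk \<open>z = h t\<close> by auto
qed

lemma D_q_start:
  assumes "z \<in> D q" "z \<notin> ran q"
  shows "z \<in> D p"
proof -
  have "z \<in> trace" using assms dom_q unfolding D_def by auto
  then obtain x k where xk: "x \<in> D p" "k \<le> steps x" "z = (h ^^ k) x" unfolding trace_def by auto
  show ?thesis
  proof (cases k)
    case 0 then show ?thesis using xk by auto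
  next
    case (Suc j)
    have "j \<le> steps x" using xk Suc by auto
    then have "(h ^^ j) x \<in> trace" using xk unfolding trace_def by blast
    then have "q ((h ^^ j) x) = Some z" using xk Suc unfolding q_def by auto
    then show ?thesis using assms by (auto intro: ranI)
  qed
qed

lemma par_q: "z \<in> D q \<Longrightarrow> par q z = shift_sgn h z"
  using par_eq_shift_sgn[OF h q_le_h] .

lemma trace_subset_D_q: "z \<in> trace \<Longrightarrow> z \<in> D q"
  using dom_q unfolding D_def by blast

lemma prel_q_within_step:
  assumes y: "y \<in> trace" "shift_sgn h y \<noteq> 0" and w: "w \<in> {min y (h y)..max y (h y)}"
  shows "prel q y w"
proof -
  have qy: "q y = Some (h y)" using y(1) unfolding q_def by simp
  have py: "par q y = shift_sgn h y" using par_q[OF trace_subset_D_q[OF y(1)]] .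
  show ?thesis
  proof (cases "y < h y")
    case True
    then have "par q y = 1" using py shift_sgn_eq_1_iff by metis
    then show ?thesis using True qy w unfolding prel_def by auto
  next
    case False
    then have "h y < y" using y(2) shift_sgn_eq_0_iff by fastforce
    then have "par q y = -1" using py shift_sgn_eq_neg1_iff by metis
    then show ?thesis using \<open>h y < y\<close> qy w unfolding prel_def by auto
  qed
qed

lemma funpow_in_trace: "x \<in> D p \<Longrightarrow> k \<le> steps x \<Longrightarrow> (h ^^ k) x \<in> trace"
  unfolding trace_def by blast

lemma psim_q_funpow:
  assumes x: "x \<in> D p" "shift_sgn h x \<noteq> 0" and k: "k \<le> Suc (steps x)"
  shows "psim q x ((h ^^ k) x)"
  using k
proof (induction k)
  case 0
  then show ?case unfolding psim_def by simp
next
  case (Suc k)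
  have "shift_sgn h ((h ^^ k) x) \<noteq> 0"
    using x(2) same_orbital_shift_sgn[OF h same_orbital_funpow] by metis
  then have "prel q ((h ^^ k) x) ((h ^^ Suc k) x)"
    using prel_q_within_step funpow_in_trace[OF x(1)] Suc.prems by simp
  then show ?case using Suc psim_if_prel psim_trans by simp
qed

lemma psim_q_last_point:
  assumes x: "x \<in> D p" "shift_sgn h x \<noteq> 0"
  shows "psim q x (last_point x)"
proof (cases "steps x")
  case 0
  have self: "x \<in> orbital_part x" using mem_orbital_part_self x by auto
  have "last_point x = x"
  proof (cases "shift_sgn h x < 0")
    case True
    have "x \<le> last_point x" using steps_down[OF x(1) True] 0 by simp
    moreover have "last_point x \<le> x"
      unfolding last_point_def using True finite_orbital_part self by simp
    ultimately show ?thesis by simp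
  next
    case False
    have "last_point x \<le> x" using steps_up[OF x(1)] False 0 by simp
    moreover have "x \<le> last_point x"
      unfolding last_point_def using False finite_orbital_part self by simp
    ultimately show ?thesis by simp
  qed
  then show ?thesis unfolding psim_def by simp
next
  case (Suc j)
  let ?y = "(h ^^ j) x"
  have y: "?y \<in> trace" "shift_sgn h ?y \<noteq> 0"
    using funpow_in_trace[OF x(1)] Suc x(2) same_orbital_shift_sgn[OF h same_orbital_funpow] by auto
  have "last_point x \<in> {min ?y (h ?y)..max ?y (h ?y)}"
  proof (cases "shift_sgn h x < 0")
    case True
    then show ?thesis using steps_down[OF x(1) True] Suc by fastforce
  next
    case False
    then show ?thesis using steps_up[OF x(1)] False Suc by fastforce
  qed
  then have "prel q ?y (last_point x)" using prel_q_within_step[OF y] by blast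
  then show ?thesis using psim_q_funpow[OF x, of j] Suc psim_if_prel psim_trans by auto
qed

lemma D_q_psim_last_point:
  assumes "z \<in> D q" "shift_sgn h z \<noteq> 0"
  shows "\<exists>x\<in>D p. same_orbital h x z \<and> psim q z (last_point x)"
proof -
  obtain x k where xk: "x \<in> D p" "k \<le> Suc (steps x)" "z = (h ^^ k) x"
    using D_q_cases[OF assms(1)] by auto
  have sxz: "same_orbital h x z" using xk same_orbital_funpow by auto
  then have "shift_sgn h x \<noteq> 0" using assms same_orbital_shift_sgn[OF h] by metis
  then have "psim q x z" "psim q x (last_point x)" using psim_q_funpow psim_q_last_point xk by auto
  then show ?thesis using sxz xk psim_sym psim_trans by blast
qed

lemma D_q_end_beyond:
  assumes z: "z \<in> D q" "q z = None" and w: "w \<in> D p" "same_orbital h z w"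
  shows "shift_sgn h z = 1 \<Longrightarrow> w < z" and "shift_sgn h z = -1 \<Longrightarrow> z < w"
proof -
  obtain x where x: "x \<in> D p" "z = h ((h ^^ steps x) x)" using D_q_end[OF z] by auto
  let ?y = "(h ^^ steps x) x"
  have xz: "same_orbital h x z" using x same_orbital_funpow[of h x "Suc (steps x)"] by simp
  have xy: "same_orbital h x ?y" using same_orbital_funpow .
  have w_part: "w \<in> orbital_part x"
    unfolding orbital_part_def using w xz same_orbital_trans[OF h] by blast
  show "w < z" if "shift_sgn h z = 1"
  proof -
    have sx: "shift_sgn h x = 1" "shift_sgn h ?y = 1"
      using that same_orbital_shift_sgn[OF h] xz xy by metis+
    have "w \<le> last_point x" unfolding last_point_def using sx w_part finite_orbital_part by simp
    also have "\<dots> \<le> ?y" using steps_up[OF x(1)] sx by simp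
    also have "\<dots> < z" using sx(2) x(2) shift_sgn_eq_1_iff by metis
    finally show ?thesis .
  qed
  show "z < w" if "shift_sgn h z = -1"
  proof -
    have sx: "shift_sgn h x = -1" "shift_sgn h ?y = -1"
      using that same_orbital_shift_sgn[OF h] xz xy by metis+
    have "z < ?y" using sx(2) x(2) shift_sgn_eq_neg1_iff by metis
    also have "\<dots> \<le> last_point x" using steps_down[OF x(1)] sx by simp
    also have "\<dots> \<le> w" unfolding last_point_def using sx w_part finite_orbital_part by simp
    finally show ?thesis .
  qed
qed

lemma q_no_bad_pair:
  assumes I: "orb_par q I s" "a \<in> I" "a' \<in> I" and bp: "bad_pair q a a'"
  shows False
proof -
  have aD: "a \<in> D q" "a' \<in> D q" "a < a'" using bp unfolding bad_pair_def by blast+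
  obtain i where "I = orbital q i" using I(1) colored_cases[of I q] unfolding orb_par_def by blast
  then have Ia: "I = orbital q a" using I(2) orbital_eq mem_orbital_iff by metis
  then have aa': "same_orbital h a a'" using I(3) orbital_same_orbital[OF h q_le_h] by blast
  have "between q a a' I" using I(1) Ia unfolding between_def orb_par_def by blast
  then have "(orb_par q I 1 \<and> q a = None \<and> a' \<notin> ran q) \<or>
      (orb_par q I (-1) \<and> q a' = None \<and> a \<notin> ran q)"
    using bp unfolding bad_pair_def by (elim conjE disjE) simp_all
  then consider
      (up) "orb_par q I 1" "q a = None" "a' \<notin> ran q"
    | (down) "orb_par q I (-1)" "q a' = None" "a \<notin> ran q"
    by auto
  then show False
  proof cases
    case up
    then have "shift_sgn h a = 1" using I(2) aD par_q unfolding orb_par_def by auto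
    then show False using D_q_end_beyond(1)[OF aD(1) up(2) D_q_start[OF aD(2) up(3)] aa'] aD by simp
  next
    case down
    then have "shift_sgn h a' = -1" using I(3) aD par_q unfolding orb_par_def by auto
    then show False
        using D_q_end_beyond(2)[OF aD(2) down(2) D_q_start[OF aD(1) down(3)]
          same_orbital_sym[OF aa']] aD
      by simp
  qed
qed

lemma psim_q_if_same_orbital:
  assumes a: "a \<in> D q" "shift_sgn h a \<noteq> 0" and b: "b \<in> D q" and ab: "same_orbital h a b"
  shows "psim q a b"
proof -
  have "shift_sgn h b \<noteq> 0" using a(2) same_orbital_shift_sgn[OF h ab] by simp
  then obtain xb where xb: "same_orbital h xb b" "psim q b (last_point xb)"
    using D_q_psim_last_point b by blast
  obtain xa where xa: "same_orbital h xa a" "psim q a (last_point xa)"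
    using D_q_psim_last_point a by blast
  have "same_orbital h xa xb"
    using same_orbital_trans[OF h same_orbital_trans[OF h xa(1) ab] same_orbital_sym[OF xb(1)]] .
  then have "last_point xa = last_point xb" using last_point_eq by blast
  then show ?thesis using xa(2) xb(2) psim_sym psim_trans by metis
qed

lemma q_neighbours_differ:
  assumes I: "orb_par q I s" and J: "orb_par q J s" and s: "s \<noteq> 0" and nb: "neighbours q I J"
  shows False
proof -
  obtain a where a: "a \<in> D q" "I = orbital q a"
    using I colored_cases[of I q] unfolding orb_par_def by blast
  obtain b where b: "b \<in> D q" "J = orbital q b"
    using J colored_cases[of J q] unfolding orb_par_def by blast
  have ab: "a < b" using nb a b in_orbital unfolding neighbours_def oprec_def by blast
  have "par q a = s" "par q b = s"
    using I J a b in_orbital unfolding orb_par_def by blast+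
  then have sa: "shift_sgn h a = s" and sb: "shift_sgn h b = s"
    using par_q a(1) b(1) by simp_all
  have "\<not> psim q a b"
  proof
    assume "psim q a b"
    then have "b \<in> I" "b \<in> J" using a(2) b(2) mem_orbital_iff in_orbital by simp_all
    then show False using nb unfolding neighbours_def oprec_def by blast
  qed
  then have nab: "\<not> same_orbital h a b" using psim_q_if_same_orbital a b sa s by blast
  obtain xa where xa: "xa \<in> D p" "same_orbital h xa a" using D_q_psim_last_point a(1) sa s by blast
  obtain xb where xb: "xb \<in> D p" "same_orbital h xb b" using D_q_psim_last_point b(1) sb s by blast
  have xab: "xa < xb"
    using different_orbitals_less[OF h nab ab same_orbital_sym[OF xa(2)]
        same_orbital_sym[OF xb(2)]] .
  have nxab: "\<not> same_orbital h xa xb"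
  proof
    assume "same_orbital h xa xb"
    then have "same_orbital h a b"
      using same_orbital_trans[OF h same_orbital_trans[OF h same_orbital_sym[OF xa(2)]] xb(2)]
      by blast
    then show False using nab by blast
  qed
  have sxa: "shift_sgn h xa = s" and sxb: "shift_sgn h xb = s"
    using sa sb same_orbital_shift_sgn[OF h xa(2)] same_orbital_shift_sgn[OF h xb(2)] by simp_all
  have "\<not> bad_bracket h p xa xb" using consolidated unfolding consolidated_def by blast
  then obtain z where z: "z \<in> D p" "xa \<le> z" "z \<le> xb" "par p z \<noteq> par p xa"
    using xa(1) xb(1) xab nxab sxa s par_eq_shift_sgn[OF h ph xa(1)]
    unfolding bad_bracket_def by auto
  then have sz: "shift_sgn h z \<noteq> s" using sxa par_eq_shift_sgn[OF h ph] xa(1) by simp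
  have nz: "\<not> same_orbital h xa z" "\<not> same_orbital h z xb"
    using sz sxa sxb same_orbital_shift_sgn[OF h, of xa z] same_orbital_shift_sgn[OF h, of z xb]
    by auto
  then have "xa \<noteq> z" "z \<noteq> xb" using same_orbital_refl by blast+
  then have "xa < z" "z < xb" using z(2,3) by simp_all
  then have "oprec I (orbital q z)" "oprec (orbital q z) J"
    using oprec_orbitals[OF h q_le_h same_orbital_sym[OF xa(2)] same_orbital_refl nz(1)]
      oprec_orbitals[OF h q_le_h same_orbital_refl same_orbital_sym[OF xb(2)] nz(2)] a(2) b(2)
    by simp_all
  moreover have "orbital q z \<in> colored q" using D_subset_D_q[OF z(1)] unfolding colored_def by blast
  ultimately show False using nb unfolding neighbours_def by blast
qed

lemma q_good: "q \<in> P_gd"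
proof -
  have "s \<noteq> t" if "orb_par q I s" "orb_par q J t" "s \<in> {1, -1}"
    "neighbours q I J \<or> neighbours q J I" for I J s t
    using that q_neighbours_differ[of I s J] q_neighbours_differ[of J s I] by auto
  then show ?thesis unfolding P_gd_def using q_PI q_no_bad_pair by blast
qed

end

lemma consolidated_good_extension:
  assumes "h \<in> AutQ" "p \<in> PI" "p \<subseteq>\<^sub>m Some \<circ> h" "consolidated h p"
  shows "\<exists>q\<in>P_gd. p \<subseteq>\<^sub>m q \<and> q \<subseteq>\<^sub>m Some \<circ> h"
proof -
  interpret truncation h p using assms by unfold_locales
  show ?thesis using q_good p_le_q q_le_h by blast
qed

section \<open>Repairing bad brackets\<close>

definition bad_brackets :: "(rat \<Rightarrow> rat) \<Rightarrow> (rat \<rightharpoonup> rat) \<Rightarrow> (rat \<times> rat) set" where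
  "bad_brackets h p = {(x, y). bad_bracket h p x y}"

lemma finite_bad_brackets: "p \<in> PI \<Longrightarrow> finite (bad_brackets h p)"
proof -
  assume "p \<in> PI"
  then have "finite (D p \<times> D p)" using finite_D by blast
  moreover have "bad_brackets h p \<subseteq> D p \<times> D p" unfolding bad_brackets_def bad_bracket_def by blast
  ultimately show ?thesis using finite_subset by blast
qed

lemma consolidated_iff: "consolidated h p \<longleftrightarrow> bad_brackets h p = {}"
  unfolding consolidated_def bad_brackets_def by blast

lemma bad_bracket_split:
  assumes h: "h \<in> AutQ" and xy: "bad_bracket h p x y" and z: "z \<in> D p" "x < z" "z < y"
  shows "bad_bracket h p x z \<or> bad_bracket h p z y"
proof -
  have run: "\<forall>w\<in>D p. x \<le> w \<and> w \<le> y \<longrightarrow> par p w = par p x"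
    and ne: "\<not> same_orbital h x y" using xy unfolding bad_bracket_def by blast+
  have pz: "par p z = par p x" using run z less_imp_le by blast
  show ?thesis
  proof (cases "same_orbital h x z")
    case True
    then have "\<not> same_orbital h z y" using ne same_orbital_trans[OF h] by blast
    moreover have "\<forall>w\<in>D p. z \<le> w \<and> w \<le> y \<longrightarrow> par p w = par p z"
      using run pz z(2) by (metis less_imp_le order.trans)
    moreover have "y \<in> D p" "par p x \<noteq> 0" using xy unfolding bad_bracket_def by blast+
    ultimately have "bad_bracket h p z y" using z pz unfolding bad_bracket_def by auto
    then show ?thesis ..
  next
    case False
    moreover have "\<forall>w\<in>D p. x \<le> w \<and> w \<le> z \<longrightarrow> par p w = par p x"
      using run z(3) by (metis less_imp_le order.trans)
    moreover have "x \<in> D p" "par p x \<noteq> 0" using xy unfolding bad_bracket_def by blast+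
    ultimately have "bad_bracket h p x z" using z unfolding bad_bracket_def by blast
    then show ?thesis ..
  qed
qed

lemma exists_tight_bad_bracket:
  assumes p: "p \<in> PI" and h: "h \<in> AutQ" and nc: "\<not> consolidated h p"
  shows "\<exists>x y. bad_bracket h p x y \<and> (\<forall>z\<in>D p. \<not> (x < z \<and> z < y))"
proof -
  let ?width = "\<lambda>(x, y). y - x"
  have fin: "finite (?width ` bad_brackets h p)" using finite_bad_brackets[OF p] by blast
  have "bad_brackets h p \<noteq> {}" using nc consolidated_iff by blast
  then have "Min (?width ` bad_brackets h p) \<in> ?width ` bad_brackets h p" using fin by simp
  then obtain x y where xy: "bad_bracket h p x y" and min: "y - x = Min (?width ` bad_brackets h p)"
    unfolding bad_brackets_def by auto
  have narrowest: "y - x \<le> y' - x'" if "bad_bracket h p x' y'" for x' y'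
    using Min_le[OF fin, of "y' - x'"] that min unfolding bad_brackets_def by force
  have "\<not> (x < z \<and> z < y)" if "z \<in> D p" for z
    using bad_bracket_split[OF h xy that] narrowest by fastforce
  then show ?thesis using xy by blast
qed

locale repair =
  fixes h :: "rat \<Rightarrow> rat" and p :: "rat \<rightharpoonup> rat" and x0 y0 :: rat
  assumes h: "h \<in> AutQ" and p: "p \<in> PI" and ph: "p \<subseteq>\<^sub>m Some \<circ> h"
    and bad: "bad_bracket h p x0 y0" and tight: "\<forall>z\<in>D p. \<not> (x0 < z \<and> z < y0)"
begin

definition sg :: rat where
  "sg = par p x0"

definition block :: "rat set" where
  "block = {z \<in> D p. z \<le> x0 \<and> (\<forall>w\<in>D p. z \<le> w \<and> w \<le> x0 \<longrightarrow> par p w = sg)}"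

lemma bracket: "x0 \<in> D p" "y0 \<in> D p" "x0 < y0" "par p x0 \<noteq> 0" "\<not> same_orbital h x0 y0"
  and bracket_run: "\<forall>w\<in>D p. x0 \<le> w \<and> w \<le> y0 \<longrightarrow> par p w = par p x0"
  using bad unfolding bad_bracket_def by blast+

lemma shift_sgn_eq_par: "z \<in> D p \<Longrightarrow> shift_sgn h z = par p z"
  using par_eq_shift_sgn[OF h ph] by simp

lemma sg_cases: "sg = 1 \<or> sg = -1"
  using bracket(4) shift_sgn_eq_par[OF bracket(1)] unfolding sg_def shift_sgn_def
  by (auto simp: sgn_if split: if_splits)

lemma shift_sgn_y0: "shift_sgn h y0 = sg"
  using bracket_run bracket(2,3) shift_sgn_eq_par[OF bracket(2)] unfolding sg_def by simp

lemma above_x0: "z \<in> D p \<Longrightarrow> x0 < z \<Longrightarrow> y0 \<le> z"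
  using tight by (meson not_le)

lemma block_D: "z \<in> block \<Longrightarrow> z \<in> D p \<and> z \<le> x0"
  unfolding block_def by blast

lemma par_block_interval:
  assumes "z \<in> block" "u \<in> D p" "z \<le> u" "u \<le> x0"
  shows "par p u = sg"
  using assms unfolding block_def by blast

lemma block_interval:
  assumes z: "z \<in> block" and u: "u \<in> D p" "z \<le> u" "u \<le> x0"
  shows "u \<in> block"
  using par_block_interval[OF z] u order.trans unfolding block_def by blast

lemma x0_in_block: "x0 \<in> block"
  using bracket(1) unfolding block_def sg_def by force

lemma block_same_orbital:
  assumes u: "u \<in> block" and v: "v \<in> D p" "same_orbital h u v"
  shows "v \<in> block"
proof -
  have "v \<le> x0"
  proof (rule ccontr)
    assume "\<not> v \<le> x0"
    then have "u \<le> x0" "x0 \<le> v" "y0 \<le> v" using block_D[OF u] above_x0 v(1) by auto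
    then have "same_orbital h u x0" "same_orbital h u y0"
      using same_orbital_convex[OF h v(2)] bracket(3) by simp_all
    then show False using bracket(5) same_orbital_trans[OF h same_orbital_sym] by blast
  qed
  moreover have "par p w = sg" if "w \<in> D p" "v \<le> w" "w \<le> x0" for w
  proof (cases "u \<le> w")
    case True
    then show ?thesis using par_block_interval[OF u that(1)] that(3) by simp
  next
    case False
    then have "same_orbital h v w"
      using same_orbital_convex[OF h same_orbital_sym[OF v(2)]] that(2) by simp
    then have "same_orbital h u w" using same_orbital_trans[OF h v(2)] by blast
    then have "shift_sgn h w = shift_sgn h u" using same_orbital_shift_sgn[OF h] by simp
    then show ?thesis
      using shift_sgn_eq_par that(1) block_D[OF u] par_block_interval[OF u] by simp
  qed
  ultimately show ?thesis unfolding block_def using v(1) by blast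
qed

lemma shift_sgn_block: "z \<in> block \<Longrightarrow> shift_sgn h z = sg"
  using block_D par_block_interval shift_sgn_eq_par by force

lemma block_step:
  assumes z: "z \<in> block" "z \<in> dom p"
  shows "h z \<in> block"
proof -
  have "p z = Some (h z)" using ph z(2) unfolding map_le_Some_comp_iff by blast
  then have "h z \<in> D p" using D_if_map_eq_Some[of p] by blast
  then show ?thesis using block_same_orbital[OF z(1) _ same_orbital_apply] by blast
qed

lemma block_step_back:
  assumes c: "c \<in> dom p" "h c \<in> block"
  shows "c \<in> block"
proof -
  have "p c = Some (h c)" using ph c(1) unfolding map_le_Some_comp_iff by blast
  then have "c \<in> D p" using D_if_map_eq_Some[of p] by blast
  then show ?thesis
    using block_same_orbital[OF c(2) _ same_orbital_sym[OF same_orbital_apply]] by blast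
qed

lemma finite_block: "finite block" unfolding block_def using finite_D[OF p] by auto

lemma exists_block_embedding:
  "\<exists>e. strict_mono_on block e \<and> (\<forall>x\<in>block. same_orbital h y0 (e x) \<and> e x < y0) \<and>
       (\<forall>z\<in>block \<inter> dom p. h (e z) = e (h z))"
proof (cases "sg = 1")
  case True
  define P where "P = {(z, h z) | z. z \<in> block \<inter> dom p}"
  have "y0 < h y0" using shift_sgn_y0 True shift_sgn_eq_1_iff by metis
  moreover have "\<forall>(a, a')\<in>P. a \<in> block \<and> a' \<in> block \<and> a < a'"
    unfolding P_def using block_step shift_sgn_block True shift_sgn_eq_1_iff by fastforce
  moreover have "\<forall>(a, a')\<in>P. \<forall>(b, b')\<in>P. a < b \<longleftrightarrow> a' < b'"
    unfolding P_def using AutQ_less_iff[OF h] by fastforce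
  ultimately obtain e where e: "strict_mono_on block e"
    "\<forall>x\<in>block. same_orbital h y0 (e x) \<and> e x < y0" "\<forall>(a, a')\<in>P. e a' = h (e a)"
    using exists_orbital_embedding[OF h _ finite_block] by blast
  have "\<forall>z\<in>block \<inter> dom p. h (e z) = e (h z)"
    using e(3) unfolding P_def by fastforce
  then show ?thesis using e by blast
next
  case False
  then have sg: "sg = -1" using sg_cases by simp
  define P where "P = {(h z, z) | z. z \<in> block \<inter> dom p}"
  have hi: "inv h \<in> AutQ" using AutQ_inv[OF h] .
  have "h y0 < y0" using shift_sgn_y0 sg shift_sgn_eq_neg1_iff by metis
  then have "y0 < inv h y0" using AutQ_less_iff[OF hi, of "h y0" y0] AutQ_inv_f_f[OF h] by simp
  moreover have "\<forall>(a, a')\<in>P. a \<in> block \<and> a' \<in> block \<and> a < a'"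
    unfolding P_def using block_step shift_sgn_block sg shift_sgn_eq_neg1_iff by fastforce
  moreover have "\<forall>(a, a')\<in>P. \<forall>(b, b')\<in>P. a < b \<longleftrightarrow> a' < b'"
    unfolding P_def using AutQ_less_iff[OF h] by fastforce
  ultimately obtain e where e: "strict_mono_on block e"
    "\<forall>x\<in>block. same_orbital (inv h) y0 (e x) \<and> e x < y0" "\<forall>(a, a')\<in>P. e a' = inv h (e a)"
    using exists_orbital_embedding[OF hi _ finite_block] by blast
  have "h (e z) = e (h z)" if "z \<in> block \<inter> dom p" for z
  proof -
    have "(h z, z) \<in> P" using that unfolding P_def by blast
    then have "e z = inv h (e (h z))" using e(3) by blast
    then show ?thesis using AutQ_f_inv_f[OF h] by simp
  qed
  then show ?thesis using e(1,2) same_orbital_inv[OF h] by blast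
qed

definition block_emb :: "rat \<Rightarrow> rat" where
  "block_emb = (SOME e. strict_mono_on block e \<and> (\<forall>x\<in>block. same_orbital h y0 (e x) \<and> e x < y0) \<and>
       (\<forall>z\<in>block \<inter> dom p. h (e z) = e (h z)))"

lemma block_emb: "strict_mono_on block block_emb"
    "\<forall>x\<in>block. same_orbital h y0 (block_emb x) \<and> block_emb x < y0"
    "\<forall>z\<in>block \<inter> dom p. h (block_emb z) = block_emb (h z)"
  using someI_ex[OF exists_block_embedding] unfolding block_emb_def by blast+

definition move :: "rat \<Rightarrow> rat" where
  "move z = (if z \<in> block then block_emb z else z)"

lemma below_block_below_emb:
  assumes a: "a \<in> D p" "a \<notin> block" and b: "b \<in> block" and ab: "a < b"
  shows "a < block_emb b"
proof -
  have "a \<le> x0" using ab block_D[OF b] by simp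
  then obtain w where w: "w \<in> D p" "a \<le> w" "w \<le> x0" "par p w \<noteq> sg"
    using a unfolding block_def by blast
  have "w < b"
  proof (rule ccontr)
    assume "\<not> w < b"
    then show False using par_block_interval[OF b w(1)] w by simp
  qed
  have "shift_sgn h w \<noteq> shift_sgn h y0" using shift_sgn_y0 shift_sgn_eq_par[OF w(1)] w(4) by simp
  then have "\<not> same_orbital h w y0" using same_orbital_shift_sgn[OF h] by blast
  moreover have "w < y0" using w bracket(3) by simp
  ultimately have "w < block_emb b"
    using different_orbitals_less[OF h _ _ same_orbital_refl] block_emb(2) b by blast
  then show ?thesis using w(2) by simp
qed

lemma strict_mono_on_move: "strict_mono_on (D p) move"
proof (rule strict_mono_onI)
  fix a b assume aD: "a \<in> D p" and bD: "b \<in> D p" and ab: "a < b"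
  consider "a \<in> block" "b \<in> block" | "a \<notin> block" "b \<notin> block" | "a \<in> block" "b \<notin> block"
    | "a \<notin> block" "b \<in> block" by blast
  then show "move a < move b"
  proof cases
    case 1
    then show ?thesis using strict_mono_onD[OF block_emb(1)] ab unfolding move_def by simp
  next
    case 2
    then show ?thesis using ab unfolding move_def by simp
  next
    case 3
    have "\<not> b \<le> x0" using block_interval[OF 3(1) bD] ab 3(2) by auto
    then have "y0 \<le> b" using above_x0 bD by simp
    then show ?thesis using 3 block_emb(2) unfolding move_def by force
  next
    case 4
    then show ?thesis using below_block_below_emb aD ab unfolding move_def by simp
  qed
qed

lemma move_commutes: "z \<in> dom p \<Longrightarrow> h (move z) = move (h z)"
  using block_step block_step_back block_emb(3) unfolding move_def by auto

lemma same_orbital_move: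
  assumes a: "a \<in> D p" and b: "b \<in> D p" and ab: "same_orbital h a b"
  shows "same_orbital h (move a) (move b)"
proof (cases "a \<in> block")
  case True
  then have "b \<in> block" using block_same_orbital b ab by blast
  then have "same_orbital h y0 (block_emb a)" "same_orbital h y0 (block_emb b)"
    using block_emb(2) True by blast+
  then have "same_orbital h (block_emb a) (block_emb b)"
    using same_orbital_trans[OF h same_orbital_sym] by blast
  then show ?thesis using True \<open>b \<in> block\<close> unfolding move_def by simp
next
  case False
  then have "b \<notin> block" using block_same_orbital a same_orbital_sym[OF ab] by blast
  then show ?thesis using False ab unfolding move_def by simp
qed

definition mover :: "rat \<Rightarrow> rat" where
  "mover = (SOME \<rho>. \<rho> \<in> AutQ \<and> (\<forall>z\<in>D p. \<rho> z = move z))"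

lemma mover: "mover \<in> AutQ" "z \<in> D p \<Longrightarrow> mover z = move z"
proof -
  have "\<exists>\<rho>. \<rho> \<in> AutQ \<and> (\<forall>z\<in>D p. \<rho> z = move z)"
    using strict_mono_on_extends_to_AutQ[OF finite_D[OF p] strict_mono_on_move] by blast
  from someI_ex[OF this] show "mover \<in> AutQ" "z \<in> D p \<Longrightarrow> mover z = move z"
    unfolding mover_def by blast+
qed

definition repaired :: "rat \<Rightarrow> rat" where
  "repaired = inv mover \<circ> h \<circ> mover"

lemma repaired_conjs: "repaired \<in> conjs h"
  unfolding repaired_def using inv_conj_in_conjs[OF mover(1)] .

lemma p_le_repaired: "p \<subseteq>\<^sub>m Some \<circ> repaired"
  unfolding map_le_Some_comp_iff
proof
  fix z assume zd: "z \<in> dom p"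
  then have pz: "p z = Some (h z)" using ph unfolding map_le_Some_comp_iff by blast
  have "repaired z = inv mover (move (h z))"
    using zd move_commutes D_if_map_eq_Some[of p, OF pz] mover(2) unfolding repaired_def by simp
  also have "\<dots> = h z"
    using D_if_map_eq_Some[of p, OF pz] mover AutQ_inv_f_f by metis
  finally show "p z = Some (repaired z)" using pz by simp
qed

lemma same_orbital_repaired_iff:
  "a \<in> D p \<Longrightarrow> b \<in> D p \<Longrightarrow> same_orbital repaired a b \<longleftrightarrow> same_orbital h (move a) (move b)"
  unfolding repaired_def using same_orbital_conj[OF mover(1)] mover(2) by simp

lemma bad_brackets_repaired: "bad_brackets repaired p \<subset> bad_brackets h p"
proof -
  have "bad_bracket h p a b" if "bad_bracket repaired p a b" for a b
    using that same_orbital_move same_orbital_repaired_iff unfolding bad_bracket_def by blast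
  moreover have "same_orbital repaired x0 y0"
  proof -
    have "x0 \<in> block" "y0 \<notin> block" using x0_in_block block_D bracket(3) by force+
    then have "same_orbital h (move x0) (move y0)"
      using block_emb(2) same_orbital_sym unfolding move_def by simp
    then show ?thesis using same_orbital_repaired_iff bracket(1,2) by blast
  qed
  ultimately show ?thesis using bad unfolding bad_brackets_def bad_bracket_def by blast
qed

end

lemma exists_consolidated_conj:
  assumes "h \<in> AutQ" "p \<in> PI" "p \<subseteq>\<^sub>m Some \<circ> h"
  shows "\<exists>h'\<in>conjs h. p \<subseteq>\<^sub>m Some \<circ> h' \<and> consolidated h' p"
  using assms
proof (induction "card (bad_brackets h p)" arbitrary: h rule: less_induct)
  case less
  show ?case
  proof (cases "consolidated h p")
    case True
    then show ?thesis using conjs_refl less.prems by blast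
  next
    case False
    then obtain x y where "bad_bracket h p x y" "\<forall>z\<in>D p. \<not> (x < z \<and> z < y)"
      using exists_tight_bad_bracket less.prems by blast
    then interpret repair h p x y using less.prems by unfold_locales
    have "card (bad_brackets repaired p) < card (bad_brackets h p)"
      using psubset_card_mono[OF finite_bad_brackets[OF p] bad_brackets_repaired] .
    then obtain h' where "h' \<in> conjs repaired" "p \<subseteq>\<^sub>m Some \<circ> h'" "consolidated h' p"
      using less.hyps AutQ_conjs[OF h repaired_conjs] p p_le_repaired by blast
    then show ?thesis using conjs_trans repaired_conjs by blast
  qed
qed

lemma exists_good_extension_conj:
  assumes h: "h \<in> AutQ" and p: "p \<in> PI" and ph: "p \<subseteq>\<^sub>m Some \<circ> h"
  shows "\<exists>h'\<in>conjs h. \<exists>q\<in>P_gd. p \<subseteq>\<^sub>m q \<and> q \<subseteq>\<^sub>m Some \<circ> h'"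
proof -
  obtain h' where h': "h' \<in> conjs h" "p \<subseteq>\<^sub>m Some \<circ> h'" "consolidated h' p"
    using exists_consolidated_conj[OF assms] by blast
  then show ?thesis
    using consolidated_good_extension[OF AutQ_conjs[OF h h'(1)] p] by blast
qed

lemma P_gamma_imp_conj:
  assumes "p \<in> P_gamma \<gamma>"
  shows "\<exists>h\<in>conjs \<gamma>. p \<subseteq>\<^sub>m Some \<circ> h"
proof -
  obtain g where g: "g \<in> Cl \<gamma>" "p \<subseteq>\<^sub>m Some \<circ> g" and p: "p \<in> PI"
    using assms unfolding P_gamma_def by blast
  have "finite (dom p)" using p unfolding PI_def by blast
  then obtain \<sigma> where \<sigma>: "\<sigma> \<in> AutQ" "\<forall>x\<in>dom p. g x = (\<sigma> \<circ> \<gamma> \<circ> inv \<sigma>) x"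
    using g(1) unfolding Cl_def by blast
  then have "p \<subseteq>\<^sub>m Some \<circ> (\<sigma> \<circ> \<gamma> \<circ> inv \<sigma>)"
    using g(2) unfolding map_le_Some_comp_iff by simp
  moreover have "\<sigma> \<circ> \<gamma> \<circ> inv \<sigma> \<in> conjs \<gamma>" unfolding conjs_def using \<sigma>(1) by blast
  ultimately show ?thesis by blast
qed

lemma P_gammaI:
  "\<gamma> \<in> AutQ \<Longrightarrow> q \<in> PI \<Longrightarrow> h \<in> conjs \<gamma> \<Longrightarrow> q \<subseteq>\<^sub>m Some \<circ> h \<Longrightarrow> q \<in> P_gamma \<gamma>"
  unfolding P_gamma_def using conjs_subset_Cl by blast

lemma PI_imp_P_gamma: "p \<in> PI \<Longrightarrow> \<exists>\<gamma>\<in>AutQ. p \<in> P_gamma \<gamma>"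
proof -
  assume p: "p \<in> PI"
  have "finite (dom p)" "strict_mono_on (dom p) (\<lambda>x. the (p x))"
    using p unfolding PI_def strict_mono_on_def by blast+
  then obtain \<gamma> where \<gamma>: "\<gamma> \<in> AutQ" "\<forall>x\<in>dom p. \<gamma> x = the (p x)"
    using strict_mono_on_extends_to_AutQ by blast
  then have "p \<subseteq>\<^sub>m Some \<circ> \<gamma>" unfolding map_le_Some_comp_iff by auto
  then show ?thesis using P_gammaI[OF \<gamma>(1) p conjs_refl] \<gamma>(1) by blast
qed

lemma P_gamma_good_cofinal:
  assumes \<gamma>: "\<gamma> \<in> AutQ" and p: "p \<in> P_gamma \<gamma>"
  shows "\<exists>q\<in>P_gd \<inter> P_gamma \<gamma>. p \<subseteq>\<^sub>m q"
proof -
  obtain h where h: "h \<in> conjs \<gamma>" "p \<subseteq>\<^sub>m Some \<circ> h" using P_gamma_imp_conj[OF p] by blast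
  have "p \<in> PI" using p unfolding P_gamma_def by blast
  then obtain h' q where q: "h' \<in> conjs h" "q \<in> P_gd" "p \<subseteq>\<^sub>m q" "q \<subseteq>\<^sub>m Some \<circ> h'"
    using exists_good_extension_conj[OF AutQ_conjs[OF \<gamma> h(1)] _ h(2)] by blast
  have "q \<in> PI" using q(2) unfolding P_gd_def by blast
  then have "q \<in> P_gamma \<gamma>" using P_gammaI[OF \<gamma> _ conjs_trans[OF h(1) q(1)] q(4)] by blast
  then show ?thesis using q(2,3) by blast
qed

theorem lemma4p3:
  shows "(\<forall>p\<in>PI. \<exists>q\<in>P_gd. p \<subseteq>\<^sub>m q) \<and>
         (\<forall>\<gamma>\<in>AutQ. \<forall>p\<in>P_gamma \<gamma>. \<exists>q\<in>P_gd \<inter> P_gamma \<gamma>. p \<subseteq>\<^sub>m q)"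
proof -
  have "\<exists>q\<in>P_gd. p \<subseteq>\<^sub>m q" if "p \<in> PI" for p
    using PI_imp_P_gamma[OF that] P_gamma_good_cofinal by blast
  then show ?thesis using P_gamma_good_cofinal by blast
qed

end
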